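(* Let $N\ge 2$ and $T\ge 1$, and let $U$ be any unitary on the Hilbert space with orthonormal basis $\{|z;i,i'\rangle : z,i,i'\ge 0\text{ integers}\}$. For a permutation $\sigma$ of $\{0,\dots,N-1\}$ let $O_\sigma|z;i,i'\rangle=(-1)^{m_{ii'}}|z;i,i'\rangle$, where for $0\le i,i'<N$, $m_{ii'}=1$ if $\sigma(i)<\sigma(i')$ and $0$ otherwise, and let $|\psi_\sigma^j\rangle=(UO_\sigma)^jU|0\rangle$. For integers $0\le k\le N-2$ and $1\le d\le N-1-k$ let $\sigma^{(k,d)}=(k,k+1,\dots,k+d)\circ\sigma$, where $(k,k+1,\dots,k+d)$ is the cyclic permutation $k\mapsto k+1\mapsto\dots\mapsto k+d\mapsto k$ (fixing all other points) and $\circ$ denotes composition with $\sigma$ applied first. Define $\omega(\sigma,\tau)=1/d$ if $\tau=\sigma^{(k,d)}$ for some such $k,d$, and $\omega(\sigma,\tau)=0$ otherwise, and $$W_j=\sum_{\sigma,\tau}\omega(\sigma,\tau)\langle\psi_\sigma^j|\psi_\tau^j\rangle,$$ the sum over all pairs of permutations of $\{0,\dots,N-1\}$. Then for every $j$ with $0\le j<T$, $|W_j-W_{j+1}|\le 2\pi\,N!$. *)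

theory Defs
  imports "HOL-Analysis.Analysis" "HOL-Combinatorics.Permutations"
begin

(* Hilbert space with orthonormal basis |z;i,i'> (z,i,i' natural numbers),
  realised as square-summable functions on nat \<times> nat \<times> nat. *)

type_synonym qstate = "nat \<times> nat \<times> nat \<Rightarrow> complex"

definition ell2 :: "qstate set" where
  "ell2 = {f. (\<lambda>x. (cmod (f x))\<^sup>2) summable_on UNIV}"

definition ipl2 :: "qstate \<Rightarrow> qstate \<Rightarrow> complex" where
  "ipl2 f g = (\<Sum>\<^sub>\<infinity>x. cnj (f x) * g x)"

definition unitary_op :: "(qstate \<Rightarrow> qstate) \<Rightarrow> bool" where
  "unitary_op U \<longleftrightarrow>
     (\<forall>f\<in>ell2. U f \<in> ell2) \<and>
     (\<forall>f\<in>ell2. \<forall>g\<in>ell2. U (\<lambda>x. f x + g x) = (\<lambda>x. U f x + U g x)) \<and>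
     (\<forall>c. \<forall>f\<in>ell2. U (\<lambda>x. c * f x) = (\<lambda>x. c * U f x)) \<and>
     (\<forall>f\<in>ell2. \<forall>g\<in>ell2. ipl2 (U f) (U g) = ipl2 f g) \<and>
     U ` ell2 = ell2"

definition ket0 :: qstate where
  "ket0 = (\<lambda>x. if x = (0, 0, 0) then 1 else 0)"

definition phase_op :: "nat \<Rightarrow> (nat \<Rightarrow> nat) \<Rightarrow> qstate \<Rightarrow> qstate" where
  "phase_op N \<sigma> f = (\<lambda>(z, i, i').
     (if i < N \<and> i' < N \<and> \<sigma> i < \<sigma> i' then -1 else 1) * f (z, i, i'))"

definition psi :: "nat \<Rightarrow> (qstate \<Rightarrow> qstate) \<Rightarrow> (nat \<Rightarrow> nat) \<Rightarrow> nat \<Rightarrow> qstate" where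
  "psi N U \<sigma> j = ((U \<circ> phase_op N \<sigma>) ^^ j) (U ket0)"

definition cyc :: "nat \<Rightarrow> nat \<Rightarrow> nat \<Rightarrow> nat" where
  "cyc k d x = (if k \<le> x \<and> x < k + d then x + 1 else if x = k + d then k else x)"

definition is_shift :: "nat \<Rightarrow> (nat \<Rightarrow> nat) \<Rightarrow> (nat \<Rightarrow> nat) \<Rightarrow> nat \<Rightarrow> nat \<Rightarrow> bool" where
  "is_shift N \<sigma> \<tau> k d \<longleftrightarrow> k \<le> N - 2 \<and> 1 \<le> d \<and> d \<le> N - 1 - k \<and> \<tau> = cyc k d \<circ> \<sigma>"

definition omega :: "nat \<Rightarrow> (nat \<Rightarrow> nat) \<Rightarrow> (nat \<Rightarrow> nat) \<Rightarrow> real" where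
  "omega N \<sigma> \<tau> =
     (if \<exists>k d. is_shift N \<sigma> \<tau> k d
      then 1 / real (THE d. \<exists>k. is_shift N \<sigma> \<tau> k d) else 0)"

definition perms :: "nat \<Rightarrow> (nat \<Rightarrow> nat) set" where
  "perms N = {\<sigma>. \<sigma> permutes {..<N}}"

definition Wsum :: "nat \<Rightarrow> (qstate \<Rightarrow> qstate) \<Rightarrow> nat \<Rightarrow> complex" where
  "Wsum N U j = (\<Sum>\<sigma>\<in>perms N. \<Sum>\<tau>\<in>perms N.
      complex_of_real (omega N \<sigma> \<tau>) * ipl2 (psi N U \<sigma> j) (psi N U \<tau> j))"

end

theory Submission
  imports Defs
begin

(* Since O_sigma and O_tau are diagonal with entries +-1 and U is unitary,
   <psi_sigma^j|psi_tau^j> - <psi_sigma^(j+1)|psi_tau^(j+1)> is a sum over basis vectors x of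
   (1 - s_sigma(x) s_tau(x)) conj(psi_sigma^j(x)) psi_tau^j(x), and only pairs whose signs differ
   at x contribute.  For tau = (k,...,k+d) o sigma and x = |z;i,i'> this happens iff the cycle
   reverses the order of sigma i and sigma i', i.e. {sigma i, sigma i'} = {l, k+d} with k <= l < k+d.
   Each such term 2|psi_sigma(x)||psi_tau(x)|/d is split by AM-GM with weights R at sigma and 1/R
   at tau, where R = sqrt((k+d-l-1/2)/(l-k+1/2)).  Summed over (k,d), the weights collected at one
   permutation form a row of a Hilbert-type matrix,
   sum_n sqrt(c/(n+1/2))/(c+n+1/2) <= integral_0^oo sqrt c/(sqrt t (c+t)) dt = pi,
   the comparison with the integral coming from convexity of the kernel.  So the contribution of x
   is at most 2 pi sum_sigma |psi_sigma^j(x)|^2, and summing over x gives 2 pi N!. *)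

section \<open>A Hilbert-type inequality\<close>

definition hilbert_kernel :: "real \<Rightarrow> real \<Rightarrow> real" where
  "hilbert_kernel c t = sqrt c / (sqrt t * (c + t))"

lemma four_div_sum_le_inverse_add:
  fixes u v :: real
  assumes "0 < u" "0 < v"
  shows "4 / (u + v) \<le> 1 / u + 1 / v"
proof -
  have "4 * (u * v) \<le> (u + v) * (u + v)"
    using zero_le_square[of "u - v"] by (simp add: algebra_simps)
  then show ?thesis
    using assms by (simp add: field_simps)
qed

lemma hilbert_kernel_midpoint_convex:
  assumes "0 < c" "0 < s" "s < t"
  shows "2 * hilbert_kernel c t \<le> hilbert_kernel c (t - s) + hilbert_kernel c (t + s)"
proof -
  define x y where "x = t - s" and "y = t + s"
  have pos: "0 < x" "0 < y" "0 < t" using assms by (auto simp: x_def y_def)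
  have kernel: "hilbert_kernel c r = sqrt c * ((1 / sqrt r) * (1 / (c + r)))" if "0 < r" for r
    using that by (simp add: hilbert_kernel_def real_sqrt_divide)
  have "sqrt x + sqrt y \<le> 2 * sqrt t"
  proof (rule power2_le_imp_le)
    have "(sqrt x + sqrt y)\<^sup>2 + (sqrt x - sqrt y)\<^sup>2 = 4 * t"
      using pos by (simp add: x_def y_def power2_eq_square algebra_simps)
    moreover have "(2 * sqrt t)\<^sup>2 = 4 * t"
      using pos by (simp add: power_mult_distrib)
    ultimately show "(sqrt x + sqrt y)\<^sup>2 \<le> (2 * sqrt t)\<^sup>2"
      using zero_le_power2[of "sqrt x - sqrt y"] by linarith
  qed (use pos in simp)
  then have "4 / (2 * sqrt t) \<le> 4 / (sqrt x + sqrt y)"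
    using pos by (intro divide_left_mono mult_pos_pos add_pos_pos) auto
  then have "2 / sqrt t \<le> 4 / (sqrt x + sqrt y)"
    by simp
  also have "\<dots> \<le> 1 / sqrt x + 1 / sqrt y"
    using pos by (intro four_div_sum_le_inverse_add) auto
  finally have inv_sqrt: "2 / sqrt t \<le> 1 / sqrt x + 1 / sqrt y" .
  have "4 / ((c + x) + (c + y)) \<le> 1 / (c + x) + 1 / (c + y)"
    using assms pos by (intro four_div_sum_le_inverse_add) auto
  moreover have "4 / ((c + x) + (c + y)) = 2 / (c + t)"
    using assms pos by (simp add: x_def y_def field_simps)
  ultimately have inv_shift: "2 / (c + t) \<le> 1 / (c + x) + 1 / (c + y)"
    by simp
  have chebyshev: "0 \<le> (1 / sqrt x - 1 / sqrt y) * (1 / (c + x) - 1 / (c + y))"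
    using assms pos
    by (cases "x \<le> y") (auto intro!: mult_nonneg_nonneg mult_nonpos_nonpos simp: frac_le)
  have "(2 / sqrt t) * (2 / (c + t)) \<le> (1 / sqrt x + 1 / sqrt y) * (1 / (c + x) + 1 / (c + y))"
    using inv_sqrt inv_shift assms pos by (intro mult_mono) auto
  also have "\<dots> \<le> 2 * ((1 / sqrt x) * (1 / (c + x)) + (1 / sqrt y) * (1 / (c + y)))"
    using chebyshev by (simp add: algebra_simps)
  finally have "2 * ((1 / sqrt t) * (1 / (c + t)))
      \<le> (1 / sqrt x) * (1 / (c + x)) + (1 / sqrt y) * (1 / (c + y))"
    by simp
  from mult_left_mono[OF this real_sqrt_ge_zero[OF less_imp_le[OF \<open>0 < c\<close>]]]
  show ?thesis
    unfolding x_def[symmetric] y_def[symmetric] kernel[OF pos(1)] kernel[OF pos(2)] kernel[OF pos(3)]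
    by (simp add: algebra_simps)
qed

lemma has_real_derivative_arctan_sqrt:
  assumes "0 < c" "0 < t"
  shows "((\<lambda>t. 2 * arctan (sqrt t / sqrt c)) has_real_derivative hilbert_kernel c t) (at t)"
proof -
  have "((\<lambda>t. 2 * arctan (sqrt t / sqrt c)) has_real_derivative
          2 * (inverse (1 + (sqrt t / sqrt c)\<^sup>2) * (inverse (sqrt t) / 2 / sqrt c))) (at t)"
    using assms by (intro DERIV_cmult DERIV_chain2[OF DERIV_arctan] DERIV_cdivide DERIV_real_sqrt)
  moreover have "2 * (inverse (1 + (u / s)\<^sup>2) * (inverse u / 2 / s)) = s / (u * (s\<^sup>2 + u\<^sup>2))"
    if "0 < s" "0 < u" for s u :: real
  proof -
    have "0 < u * (s\<^sup>2 + u\<^sup>2)"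
      using that by (simp add: add_pos_pos)
    then show ?thesis
      using that by (simp add: field_simps power2_eq_square)
  qed
  ultimately show ?thesis
    using assms by (simp add: hilbert_kernel_def)
qed

lemma midpoint_convex_le_increment:
  fixes F g :: "real \<Rightarrow> real"
  assumes "0 < \<delta>"
    and cont: "continuous_on {t - \<delta>..t + \<delta>} F"
    and deriv: "\<And>x. t - \<delta> < x \<Longrightarrow> x < t + \<delta> \<Longrightarrow> (F has_real_derivative g x) (at x)"
    and midpoint: "\<And>s. 0 < s \<Longrightarrow> s < \<delta> \<Longrightarrow> 2 * g t \<le> g (t - s) + g (t + s)"
  shows "2 * \<delta> * g t \<le> F (t + \<delta>) - F (t - \<delta>)"
proof -
  define h where "h s = F (t + s) - F (t - s) - 2 * s * g t" for s
  have "h 0 \<le> h \<delta>"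
  proof (rule DERIV_nonneg_imp_increasing_open[of 0 \<delta> h])
    fix s assume s: "0 < s" "s < \<delta>"
    have "(h has_real_derivative g (t + s) * 1 - g (t - s) * (-1) - 2 * g t) (at s)"
      unfolding h_def using s
      by (intro derivative_intros DERIV_chain2[of F] deriv) (auto intro!: derivative_eq_intros)
    then show "\<exists>y. (h has_real_derivative y) (at s) \<and> 0 \<le> y"
      using midpoint[OF s] by (intro exI conjI) auto
  next
    show "continuous_on {0..\<delta>} h"
      unfolding h_def
      by (intro continuous_intros continuous_on_compose2[OF cont]) auto
  qed (use \<open>0 < \<delta>\<close> in auto)
  then show ?thesis by (simp add: h_def)
qed

lemma sum_hilbert_kernel_le_pi:
  assumes "0 < c"
  shows "(\<Sum>n<M. hilbert_kernel c (real n + 1/2)) \<le> pi"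
proof -
  define F where "F t = 2 * arctan (sqrt t / sqrt c)" for t
  have "hilbert_kernel c (real n + 1/2) \<le> F (Suc n) - F n" for n
  proof -
    have "2 * (1/2) * hilbert_kernel c (real n + 1/2) \<le> F (real n + 1/2 + 1/2) - F (real n + 1/2 - 1/2)"
    proof (rule midpoint_convex_le_increment)
      show "continuous_on {real n + 1/2 - 1/2..real n + 1/2 + 1/2} F"
        unfolding F_def using assms by (intro continuous_intros) auto
      show "(F has_real_derivative hilbert_kernel c x) (at x)" if "real n + 1/2 - 1/2 < x" for x
        unfolding F_def using assms that by (intro has_real_derivative_arctan_sqrt) auto
      show "2 * hilbert_kernel c (real n + 1/2)
          \<le> hilbert_kernel c (real n + 1/2 - s) + hilbert_kernel c (real n + 1/2 + s)"
        if "0 < s" "s < 1/2" for s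
        using assms that by (intro hilbert_kernel_midpoint_convex) auto
    qed simp
    then show ?thesis by (simp add: add.commute)
  qed
  then have "(\<Sum>n<M. hilbert_kernel c (real n + 1/2)) \<le> (\<Sum>n<M. F (Suc n) - F n)"
    by (rule sum_mono)
  also have "\<dots> = F M - F 0"
    using sum_lessThan_telescope[of "\<lambda>n. F (real n)"] by simp
  also have "\<dots> < pi"
    using arctan_ubound[of "sqrt M / sqrt c"] by (simp add: F_def)
  finally show ?thesis by simp
qed

section \<open>Cycles and the weights omega\<close>

definition shift_params :: "nat \<Rightarrow> (nat \<times> nat) set" where
  "shift_params N = {(k, d). 1 \<le> d \<and> k + d < N}"

lemma is_shift_iff: "is_shift N \<sigma> \<tau> k d \<longleftrightarrow> (k, d) \<in> shift_params N \<and> \<tau> = cyc k d \<circ> \<sigma>"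
  by (auto simp: is_shift_def shift_params_def)

lemma finite_shift_params: "finite (shift_params N)"
proof (rule finite_subset)
  show "shift_params N \<subseteq> {..<N} \<times> {..<N}"
    by (auto simp: shift_params_def)
qed simp

lemma cyc_permutes: "k + d < N \<Longrightarrow> cyc k d permutes {..<N}"
  by (rule inj_imp_permutes) (auto simp: cyc_def inj_on_def)

lemma cyc_eq_cyc_iff:
  assumes "1 \<le> d" "1 \<le> d'"
  shows "cyc k d = cyc k' d' \<longleftrightarrow> k = k' \<and> d = d'"
proof
  have moved: "{x. cyc k d x \<noteq> x} = {k..k + d}" if "1 \<le> d" for k d
    using that by (auto simp: cyc_def)
  assume "cyc k d = cyc k' d'"
  then have "{k..k + d} = {k'..k' + d'}"
    using moved assms by metis
  then show "k = k' \<and> d = d'"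
    by simp
qed simp

lemma cyc_changes_order_iff:
  assumes "1 \<le> d"
  shows "(cyc k d a < cyc k d b) \<noteq> (a < b) \<longleftrightarrow>
    k \<le> min a b \<and> min a b < max a b \<and> max a b = k + d"
proof -
  have "a < k \<or> k \<le> a \<and> a < k + d \<or> a = k + d \<or> k + d < a"
       "b < k \<or> k \<le> b \<and> b < k + d \<or> b = k + d \<or> k + d < b"
    by arith+
  then show ?thesis
    using assms by (elim disjE conjE) (simp_all add: cyc_def min_def max_def)
qed

lemma cyc_min_max:
  assumes "1 \<le> d" "k \<le> min a b" "min a b < max a b" "max a b = k + d"
  shows "min (cyc k d a) (cyc k d b) = k" "max (cyc k d a) (cyc k d b) = min a b + 1"
  using assms by (cases "a \<le> b"; simp add: cyc_def min_def max_def)+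

lemma cyc_comp_eq_cyc_comp_iff:
  assumes "\<sigma> permutes S" "(k, d) \<in> shift_params N" "(k', d') \<in> shift_params N"
  shows "cyc k d \<circ> \<sigma> = cyc k' d' \<circ> \<sigma> \<longleftrightarrow> k = k' \<and> d = d'"
proof -
  have "cyc k d \<circ> \<sigma> = cyc k' d' \<circ> \<sigma> \<longleftrightarrow> cyc k d = cyc k' d'"
    using permutes_surj[OF assms(1)] by (auto intro: surj_fun_eq)
  then show ?thesis
    using assms(2,3) by (simp add: shift_params_def cyc_eq_cyc_iff)
qed

lemma omega_cyc_comp:
  assumes "\<sigma> permutes {..<N}" "(k, d) \<in> shift_params N"
  shows "omega N \<sigma> (cyc k d \<circ> \<sigma>) = 1 / real d"
proof -
  have "is_shift N \<sigma> (cyc k d \<circ> \<sigma>) k' d' \<longleftrightarrow> k' = k \<and> d' = d" for k' d'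
    using cyc_comp_eq_cyc_comp_iff[OF assms(1)] assms(2) by (auto simp: is_shift_iff)
  then show ?thesis
    unfolding omega_def by auto
qed

lemma omega_eq_0:
  assumes "\<tau> \<notin> (\<lambda>(k, d). cyc k d \<circ> \<sigma>) ` shift_params N"
  shows "omega N \<sigma> \<tau> = 0"
  using assms by (auto simp: omega_def is_shift_iff)

lemma omega_nonneg: "0 \<le> omega N \<sigma> \<tau>"
  by (simp add: omega_def)

lemma finite_perms: "finite (perms N)"
  by (simp add: perms_def finite_permutations)

lemma card_perms: "card (perms N) = fact N"
  unfolding perms_def by (rule card_permutations) auto

lemma cyc_comp_in_perms:
  assumes "\<sigma> \<in> perms N" "(k, d) \<in> shift_params N"
  shows "cyc k d \<circ> \<sigma> \<in> perms N"
  using assms by (auto simp: perms_def shift_params_def intro!: permutes_compose cyc_permutes)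

lemma bij_betw_cyc_comp:
  assumes "(k, d) \<in> shift_params N"
  shows "bij_betw (\<lambda>\<sigma>. cyc k d \<circ> \<sigma>) (perms N) (perms N)"
proof -
  have cyc: "cyc k d permutes {..<N}"
    using assms by (intro cyc_permutes) (auto simp: shift_params_def)
  show ?thesis
  proof (rule bij_betw_byWitness[where f' = "\<lambda>\<tau>. inv (cyc k d) \<circ> \<tau>"])
    show "(\<lambda>\<sigma>. cyc k d \<circ> \<sigma>) ` perms N \<subseteq> perms N"
      using cyc by (auto simp: perms_def intro: permutes_compose)
    show "(\<lambda>\<tau>. inv (cyc k d) \<circ> \<tau>) ` perms N \<subseteq> perms N"
      using permutes_inv[OF cyc] by (auto simp: perms_def intro: permutes_compose)
  qed (simp_all add: o_assoc permutes_inv_o[OF cyc])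
qed

lemma sum_omega:
  fixes F :: "(nat \<Rightarrow> nat) \<Rightarrow> real"
  assumes "\<sigma> \<in> perms N"
  shows "(\<Sum>\<tau>\<in>perms N. omega N \<sigma> \<tau> * F \<tau>) = (\<Sum>(k, d)\<in>shift_params N. F (cyc k d \<circ> \<sigma>) / real d)"
proof -
  have \<sigma>: "\<sigma> permutes {..<N}"
    using assms by (simp add: perms_def)
  let ?shift = "\<lambda>(k, d). cyc k d \<circ> \<sigma>"
  have inj: "inj_on ?shift (shift_params N)"
    using cyc_comp_eq_cyc_comp_iff[OF \<sigma>] by (auto simp: inj_on_def)
  have "(\<Sum>\<tau>\<in>perms N. omega N \<sigma> \<tau> * F \<tau>) = (\<Sum>\<tau>\<in>?shift ` shift_params N. omega N \<sigma> \<tau> * F \<tau>)"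
    using cyc_comp_in_perms[OF assms]
    by (intro sum.mono_neutral_right) (auto simp: perms_def finite_permutations omega_eq_0)
  also have "\<dots> = (\<Sum>(k, d)\<in>shift_params N. omega N \<sigma> (cyc k d \<circ> \<sigma>) * F (cyc k d \<circ> \<sigma>))"
    by (subst sum.reindex[OF inj]) (simp add: case_prod_unfold)
  also have "\<dots> = (\<Sum>(k, d)\<in>shift_params N. F (cyc k d \<circ> \<sigma>) / real d)"
    by (intro sum.cong) (auto simp: omega_cyc_comp[OF \<sigma>])
  finally show ?thesis .
qed

section \<open>Splitting the contributions of order-reversing pairs\<close>

lemma two_mult_le_weighted_squares:
  fixes R S x y :: real
  assumes "0 \<le> S" "R * S = 1"
  shows "2 * x * y \<le> R * x\<^sup>2 + S * y\<^sup>2"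
proof -
  have "S * (R * x - y)\<^sup>2 = (R * S) * (R * x\<^sup>2) - 2 * (R * S) * x * y + S * y\<^sup>2"
    by (simp add: power2_eq_square algebra_simps)
  also have "\<dots> = R * x\<^sup>2 - 2 * x * y + S * y\<^sup>2"
    using assms(2) by simp
  finally show ?thesis
    using mult_nonneg_nonneg[OF assms(1) zero_le_power2[of "R * x - y"]] by linarith
qed

lemma double_sum_le_of_split_bound:
  fixes t A B :: "'e \<Rightarrow> 'a \<Rightarrow> real" and u :: "'a \<Rightarrow> real"
  assumes "finite P" "finite E"
    and bij: "\<And>e. e \<in> E \<Longrightarrow> bij_betw (f e) P P"
    and split: "\<And>e x. e \<in> E \<Longrightarrow> x \<in> P \<Longrightarrow> t e x \<le> A e x * u x + B e (f e x) * u (f e x)"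
    and A: "\<And>x. x \<in> P \<Longrightarrow> (\<Sum>e\<in>E. A e x) \<le> \<alpha>"
    and B: "\<And>y. y \<in> P \<Longrightarrow> (\<Sum>e\<in>E. B e y) \<le> \<beta>"
    and u: "\<And>x. x \<in> P \<Longrightarrow> 0 \<le> u x"
  shows "(\<Sum>x\<in>P. \<Sum>e\<in>E. t e x) \<le> (\<alpha> + \<beta>) * (\<Sum>x\<in>P. u x)"
proof -
  have "(\<Sum>x\<in>P. \<Sum>e\<in>E. t e x)
      \<le> (\<Sum>x\<in>P. \<Sum>e\<in>E. A e x * u x) + (\<Sum>x\<in>P. \<Sum>e\<in>E. B e (f e x) * u (f e x))"
    by (simp add: split sum_mono flip: sum.distrib)
  also have "(\<Sum>x\<in>P. \<Sum>e\<in>E. B e (f e x) * u (f e x)) = (\<Sum>e\<in>E. \<Sum>y\<in>P. B e y * u y)"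
    by (subst sum.swap) (intro sum.cong refl sum.reindex_bij_betw bij)
  also have "\<dots> = (\<Sum>y\<in>P. (\<Sum>e\<in>E. B e y) * u y)"
    by (subst sum.swap) (simp add: sum_distrib_right)
  also have "(\<Sum>x\<in>P. \<Sum>e\<in>E. A e x * u x) = (\<Sum>x\<in>P. (\<Sum>e\<in>E. A e x) * u x)"
    by (simp add: sum_distrib_right)
  also have "(\<Sum>x\<in>P. (\<Sum>e\<in>E. A e x) * u x) + (\<Sum>y\<in>P. (\<Sum>e\<in>E. B e y) * u y)
      \<le> (\<Sum>x\<in>P. \<alpha> * u x) + (\<Sum>y\<in>P. \<beta> * u y)"
    by (intro add_mono sum_mono mult_right_mono A B u)
  finally show ?thesis
    by (simp add: sum_distrib_left distrib_right sum.distrib)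
qed

lemma sum_le_sum_reindex_support:
  fixes w :: "'a \<Rightarrow> real"
  assumes "finite A" "finite J" "inj_on h J"
    and support: "\<And>x. x \<in> A \<Longrightarrow> w x \<noteq> 0 \<Longrightarrow> x \<in> h ` J"
    and nonneg: "\<And>x. 0 \<le> w x"
  shows "sum w A \<le> (\<Sum>j\<in>J. w (h j))"
proof -
  have "sum w A = sum w (A \<inter> h ` J)"
    using assms(1) support by (intro sum.mono_neutral_right) auto
  also have "\<dots> \<le> sum w (h ` J)"
    using assms(2) nonneg by (intro sum_mono2) auto
  also have "\<dots> = (\<Sum>j\<in>J. w (h j))"
    using assms(3) by (simp add: sum.reindex)
  finally show ?thesis .
qed

(* For a pair of values {l, k + d} with k \<le> l < k + d, which the cycle maps to {k, l + 1},
   lower_weight is the weight R of the AM-GM split at the first permutation, and upper_weight,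
   read off at the image pair, is 1/R. *)
definition lower_weight :: "nat \<Rightarrow> nat \<Rightarrow> nat \<Rightarrow> nat \<Rightarrow> real" where
  "lower_weight k d a b =
     (if k \<le> min a b \<and> min a b < max a b \<and> max a b = k + d
      then sqrt ((real (k + d) - real (min a b) - 1/2) / (real (min a b) - real k + 1/2)) else 0)"

definition upper_weight :: "nat \<Rightarrow> nat \<Rightarrow> nat \<Rightarrow> nat \<Rightarrow> real" where
  "upper_weight k d a b =
     (if k = min a b \<and> min a b < max a b \<and> max a b \<le> k + d
      then sqrt ((real (max a b) - real k - 1/2) / (real (k + d) - real (max a b) + 1/2)) else 0)"

lemma lower_weight_nonneg: "0 \<le> lower_weight k d a b"
  by (simp add: lower_weight_def)

lemma upper_weight_nonneg: "0 \<le> upper_weight k d a b"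
proof -
  have "0 \<le> (real (max a b) - real k - 1/2) / (real (k + d) - real (max a b) + 1/2)"
    if "k = min a b" "min a b < max a b" "max a b \<le> k + d"
  proof -
    have "real k + 1 \<le> real (max a b)" "real (max a b) \<le> real (k + d)"
      using that by linarith+
    then show ?thesis by (intro divide_nonneg_nonneg) auto
  qed
  then show ?thesis by (simp add: upper_weight_def)
qed

lemma lower_weight_mult_upper_weight_cyc:
  assumes "1 \<le> d" "(cyc k d a < cyc k d b) \<noteq> (a < b)"
  shows "lower_weight k d a b * upper_weight k d (cyc k d a) (cyc k d b) = 1"
proof -
  define l where "l = min a b"
  have l: "k \<le> l" "l < max a b" "max a b = k + d"
    using assms cyc_changes_order_iff unfolding l_def by blast+
  have image_pair: "min (cyc k d a) (cyc k d b) = k" "max (cyc k d a) (cyc k d b) = l + 1"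
    using cyc_min_max[OF assms(1) l[unfolded l_def]] by (simp_all add: l_def)
  define X Y where "X = real (k + d) - real l - 1/2" and "Y = real l - real k + 1/2"
  have XY: "0 < X" "0 < Y"
    using l by (simp_all add: X_def Y_def)
  have "lower_weight k d a b = sqrt (X / Y)"
    using l by (simp add: lower_weight_def l_def[symmetric] X_def Y_def)
  moreover have "upper_weight k d (cyc k d a) (cyc k d b) = sqrt (Y / X)"
    using l by (simp add: upper_weight_def image_pair X_def Y_def algebra_simps)
  ultimately show ?thesis
    using XY by (simp flip: real_sqrt_mult)
qed

lemma sum_lower_weight_le_pi: "(\<Sum>(k, d)\<in>shift_params N. lower_weight k d a b / real d) \<le> pi"
proof (cases "min a b < max a b")
  case False
  then show ?thesis
    by (simp add: lower_weight_def pi_ge_zero)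
next
  case True
  define lo hi where "lo = min a b" and "hi = max a b"
  define c where "c = real hi - real lo - 1/2"
  have "lo < hi" using True by (simp add: lo_def hi_def)
  have "(\<Sum>(k, d)\<in>shift_params N. lower_weight k d a b / real d)
      \<le> (\<Sum>j<Suc lo. (\<lambda>(k, d). lower_weight k d a b / real d) (lo - j, hi - lo + j))"
  proof (rule sum_le_sum_reindex_support)
    show "inj_on (\<lambda>j. (lo - j, hi - lo + j)) {..<Suc lo}"
      by (auto simp: inj_on_def)
    show "x \<in> (\<lambda>j. (lo - j, hi - lo + j)) ` {..<Suc lo}"
      if "(\<lambda>(k, d). lower_weight k d a b / real d) x \<noteq> 0" for x
    proof -
      obtain k d where x: "x = (k, d)" by (cases x)
      with that have "k \<le> lo" "hi = k + d"
        by (auto simp: lower_weight_def lo_def hi_def split: if_splits)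
      then show ?thesis
        unfolding x using \<open>lo < hi\<close> by (intro image_eqI[where x = "lo - k"]) auto
    qed
  qed (auto simp: finite_shift_params lower_weight_nonneg)
  also have "\<dots> = (\<Sum>j<Suc lo. hilbert_kernel c (real j + 1/2))"
  proof (intro sum.cong refl)
    fix j assume "j \<in> {..<Suc lo}"
    then have "j \<le> lo" by simp
    then show "(\<lambda>(k, d). lower_weight k d a b / real d) (lo - j, hi - lo + j)
        = hilbert_kernel c (real j + 1/2)"
      using True
      by (simp add: lower_weight_def hilbert_kernel_def c_def lo_def[symmetric] hi_def[symmetric]
          of_nat_diff real_sqrt_divide divide_divide_eq_left algebra_simps)
  qed
  also have "\<dots> \<le> pi"
    using True by (intro sum_hilbert_kernel_le_pi) (simp add: c_def lo_def hi_def)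
  finally show ?thesis .
qed

lemma sum_upper_weight_le_pi: "(\<Sum>(k, d)\<in>shift_params N. upper_weight k d a b / real d) \<le> pi"
proof (cases "min a b < max a b")
  case False
  then show ?thesis
    by (simp add: upper_weight_def pi_ge_zero)
next
  case True
  define lo hi where "lo = min a b" and "hi = max a b"
  define c where "c = real hi - real lo - 1/2"
  have "lo < hi" using True by (simp add: lo_def hi_def)
  have "(\<Sum>(k, d)\<in>shift_params N. upper_weight k d a b / real d)
      \<le> (\<Sum>n<N - hi. (\<lambda>(k, d). upper_weight k d a b / real d) (lo, hi - lo + n))"
  proof (rule sum_le_sum_reindex_support)
    show "inj_on (\<lambda>n. (lo, hi - lo + n)) {..<N - hi}"
      by (auto simp: inj_on_def)
    show "x \<in> (\<lambda>n. (lo, hi - lo + n)) ` {..<N - hi}"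
      if "x \<in> shift_params N" "(\<lambda>(k, d). upper_weight k d a b / real d) x \<noteq> 0" for x
    proof -
      obtain k d where x: "x = (k, d)" by (cases x)
      with that have "k = lo" "hi \<le> k + d" "k + d < N"
        by (auto simp: upper_weight_def shift_params_def lo_def hi_def split: if_splits)
      then show ?thesis
        unfolding x using \<open>lo < hi\<close> by (intro image_eqI[where x = "k + d - hi"]) auto
    qed
  qed (auto simp: finite_shift_params upper_weight_nonneg)
  also have "\<dots> = (\<Sum>n<N - hi. hilbert_kernel c (real n + 1/2))"
    using True
    by (intro sum.cong refl)
      (simp add: upper_weight_def hilbert_kernel_def c_def lo_def[symmetric] hi_def[symmetric]
        of_nat_diff real_sqrt_divide divide_divide_eq_left algebra_simps)
  also have "\<dots> \<le> pi"
    using True by (intro sum_hilbert_kernel_le_pi) (simp add: c_def lo_def hi_def)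
  finally show ?thesis .
qed

lemma order_change_le_weights:
  assumes "1 \<le> d"
  shows "(if (a < b) = (cyc k d a < cyc k d b) then 0 else 2 * x * y)
    \<le> lower_weight k d a b * x\<^sup>2 + upper_weight k d (cyc k d a) (cyc k d b) * y\<^sup>2"
proof (cases "(a < b) = (cyc k d a < cyc k d b)")
  case True
  then show ?thesis
    using lower_weight_nonneg upper_weight_nonneg by (simp add: add_nonneg_nonneg)
next
  case False
  then show ?thesis
    using two_mult_le_weighted_squares[OF upper_weight_nonneg lower_weight_mult_upper_weight_cyc[OF assms]]
    by auto
qed

lemma sum_omega_order_change_le:
  fixes u :: "(nat \<Rightarrow> nat) \<Rightarrow> real"
  shows "(\<Sum>\<sigma>\<in>perms N. \<Sum>\<tau>\<in>perms N.
            omega N \<sigma> \<tau> * (if (\<sigma> i < \<sigma> i') = (\<tau> i < \<tau> i') then 0 else 2 * u \<sigma> * u \<tau>))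
    \<le> 2 * pi * (\<Sum>\<sigma>\<in>perms N. (u \<sigma>)\<^sup>2)"
proof -
  define shift :: "nat \<times> nat \<Rightarrow> (nat \<Rightarrow> nat) \<Rightarrow> nat \<Rightarrow> nat"
    where "shift e = (\<lambda>\<sigma>. cyc (fst e) (snd e) \<circ> \<sigma>)" for e
  define t :: "nat \<times> nat \<Rightarrow> (nat \<Rightarrow> nat) \<Rightarrow> real"
    where "t e \<sigma> = (if (\<sigma> i < \<sigma> i') = (shift e \<sigma> i < shift e \<sigma> i') then 0
      else 2 * u \<sigma> * u (shift e \<sigma>)) / real (snd e)" for e \<sigma>
  define A :: "nat \<times> nat \<Rightarrow> (nat \<Rightarrow> nat) \<Rightarrow> real"
    where "A e \<sigma> = lower_weight (fst e) (snd e) (\<sigma> i) (\<sigma> i') / real (snd e)" for e \<sigma>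
  define B :: "nat \<times> nat \<Rightarrow> (nat \<Rightarrow> nat) \<Rightarrow> real"
    where "B e \<tau> = upper_weight (fst e) (snd e) (\<tau> i) (\<tau> i') / real (snd e)" for e \<tau>
  have "(\<Sum>\<sigma>\<in>perms N. \<Sum>\<tau>\<in>perms N.
            omega N \<sigma> \<tau> * (if (\<sigma> i < \<sigma> i') = (\<tau> i < \<tau> i') then 0 else 2 * u \<sigma> * u \<tau>))
      = (\<Sum>\<sigma>\<in>perms N. \<Sum>e\<in>shift_params N. t e \<sigma>)"
    unfolding t_def shift_def by (intro sum.cong refl) (simp add: sum_omega case_prod_unfold)
  also have "\<dots> \<le> (pi + pi) * (\<Sum>\<sigma>\<in>perms N. (u \<sigma>)\<^sup>2)"
  proof (rule double_sum_le_of_split_bound[where f = shift and A = A and B = B])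
    fix e \<sigma> assume "e \<in> shift_params N"
    then have "1 \<le> snd e"
      by (auto simp: shift_params_def)
    from divide_right_mono[OF order_change_le_weights[OF this, of "\<sigma> i" "\<sigma> i'" "fst e" "u \<sigma>"
          "u (shift e \<sigma>)"] of_nat_0_le_iff]
    show "t e \<sigma> \<le> A e \<sigma> * (u \<sigma>)\<^sup>2 + B e (shift e \<sigma>) * (u (shift e \<sigma>))\<^sup>2"
      by (simp add: t_def A_def B_def shift_def add_divide_distrib)
  next
    show "(\<Sum>e\<in>shift_params N. A e \<sigma>) \<le> pi" for \<sigma>
      using sum_lower_weight_le_pi by (simp add: A_def case_prod_unfold)
    show "(\<Sum>e\<in>shift_params N. B e \<tau>) \<le> pi" for \<tau>
      using sum_upper_weight_le_pi by (simp add: B_def case_prod_unfold)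
  qed (auto simp: finite_perms finite_shift_params shift_def bij_betw_cyc_comp)
  finally show ?thesis
    by simp
qed

section \<open>Inner products of the states psi\<close>

lemma has_sum_sum:
  fixes f :: "'i \<Rightarrow> 'a \<Rightarrow> 'b::topological_comm_monoid_add"
  assumes "finite I" "\<And>i. i \<in> I \<Longrightarrow> (f i has_sum s i) A"
  shows "((\<lambda>x. \<Sum>i\<in>I. f i x) has_sum (\<Sum>i\<in>I. s i)) A"
  using assms
proof (induction I rule: finite_induct)
  case (insert i I)
  then show ?case
    by (simp add: has_sum_add)
qed simp

lemma has_sum_diff:
  fixes f g :: "'a \<Rightarrow> 'b::topological_ab_group_add"
  assumes "(f has_sum a) A" "(g has_sum b) A"
  shows "((\<lambda>x. f x - g x) has_sum (a - b)) A"
proof -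
  have "((\<lambda>x. - g x) has_sum - b) A"
    using assms(2) by (simp add: has_sum_uminus)
  from has_sum_add[OF assms(1) this] show ?thesis
    by simp
qed

lemma ell2_iff: "f \<in> ell2 \<longleftrightarrow> (\<lambda>x. (cmod (f x))\<^sup>2) summable_on UNIV"
  by (simp add: ell2_def)

lemma has_sum_ipl2:
  assumes "f \<in> ell2" "g \<in> ell2"
  shows "((\<lambda>x. cnj (f x) * g x) has_sum ipl2 f g) UNIV"
proof -
  have "(\<lambda>x. norm (cnj (f x) * cnj (f x))) summable_on UNIV"
    using assms(1) unfolding ell2_iff by (simp add: norm_mult power2_eq_square)
  moreover have "(\<lambda>x. norm (g x * g x)) summable_on UNIV"
    using assms(2) unfolding ell2_iff by (simp add: norm_mult power2_eq_square)
  ultimately have "(\<lambda>x. cnj (f x) * g x) summable_on UNIV"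
    by (rule abs_summable_summable[OF abs_summable_product])
  then show ?thesis
    by (simp add: ipl2_def)
qed

definition order_sign :: "nat \<Rightarrow> (nat \<Rightarrow> nat) \<Rightarrow> nat \<times> nat \<times> nat \<Rightarrow> real" where
  "order_sign N \<sigma> = (\<lambda>(z, i, i'). if i < N \<and> i' < N \<and> \<sigma> i < \<sigma> i' then -1 else 1)"

lemma phase_op_eq: "phase_op N \<sigma> f = (\<lambda>x. of_real (order_sign N \<sigma> x) * f x)"
  by (auto simp: phase_op_def order_sign_def)

lemma abs_order_sign [simp]: "\<bar>order_sign N \<sigma> x\<bar> = 1"
  by (simp add: order_sign_def split: prod.split)

lemma order_sign_mult_self [simp]: "order_sign N \<sigma> x * order_sign N \<sigma> x = 1"
  by (simp add: order_sign_def split: prod.split)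

lemma abs_one_minus_order_sign_le:
  "\<bar>1 - order_sign N \<sigma> (z, i, i') * order_sign N \<tau> (z, i, i')\<bar>
    \<le> (if (\<sigma> i < \<sigma> i') = (\<tau> i < \<tau> i') then 0 else 2)"
  by (simp add: order_sign_def)

lemma norm_sum_omega_phase_le:
  fixes p :: "(nat \<Rightarrow> nat) \<Rightarrow> complex"
  shows "norm (\<Sum>\<sigma>\<in>perms N. \<Sum>\<tau>\<in>perms N. of_real (omega N \<sigma> \<tau>) *
            (of_real (1 - order_sign N \<sigma> x * order_sign N \<tau> x) * (cnj (p \<sigma>) * p \<tau>)))
    \<le> 2 * pi * (\<Sum>\<sigma>\<in>perms N. (cmod (p \<sigma>))\<^sup>2)"
proof -
  obtain z i i' where x: "x = (z, i, i')"
    by (cases x) auto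
  have "norm (\<Sum>\<sigma>\<in>perms N. \<Sum>\<tau>\<in>perms N. of_real (omega N \<sigma> \<tau>) *
            (of_real (1 - order_sign N \<sigma> x * order_sign N \<tau> x) * (cnj (p \<sigma>) * p \<tau>)))
      \<le> (\<Sum>\<sigma>\<in>perms N. \<Sum>\<tau>\<in>perms N. omega N \<sigma> \<tau> *
            (\<bar>1 - order_sign N \<sigma> x * order_sign N \<tau> x\<bar> * (cmod (p \<sigma>) * cmod (p \<tau>))))"
    by (rule order_trans[OF norm_sum sum_mono], rule order_trans[OF norm_sum])
      (simp add: norm_mult omega_nonneg del: of_real_diff of_real_mult)
  also have "\<dots> \<le> (\<Sum>\<sigma>\<in>perms N. \<Sum>\<tau>\<in>perms N. omega N \<sigma> \<tau> *
            (if (\<sigma> i < \<sigma> i') = (\<tau> i < \<tau> i') then 0 else 2 * cmod (p \<sigma>) * cmod (p \<tau>)))"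
    unfolding x
    by (intro sum_mono mult_left_mono omega_nonneg
        order_trans[OF mult_right_mono[OF abs_one_minus_order_sign_le]]) auto
  also have "\<dots> \<le> 2 * pi * (\<Sum>\<sigma>\<in>perms N. (cmod (p \<sigma>))\<^sup>2)"
    by (rule sum_omega_order_change_le)
  finally show ?thesis .
qed

lemma phase_op_in_ell2: "f \<in> ell2 \<Longrightarrow> phase_op N \<sigma> f \<in> ell2"
  by (simp add: ell2_iff phase_op_eq norm_mult)

lemma has_sum_ipl2_diff_phase_op:
  assumes "f \<in> ell2" "g \<in> ell2"
  shows "((\<lambda>x. of_real (1 - order_sign N \<sigma> x * order_sign N \<tau> x) * (cnj (f x) * g x))
    has_sum (ipl2 f g - ipl2 (phase_op N \<sigma> f) (phase_op N \<tau> g))) UNIV"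
proof -
  have "((\<lambda>x. cnj (f x) * g x - cnj (phase_op N \<sigma> f x) * phase_op N \<tau> g x)
      has_sum (ipl2 f g - ipl2 (phase_op N \<sigma> f) (phase_op N \<tau> g))) UNIV"
    using assms phase_op_in_ell2 by (intro has_sum_diff has_sum_ipl2)
  then show ?thesis
    by (simp add: phase_op_eq algebra_simps)
qed

lemma ipl2_phase_op_self:
  assumes "f \<in> ell2"
  shows "ipl2 (phase_op N \<sigma> f) (phase_op N \<sigma> f) = ipl2 f f"
proof -
  have "((\<lambda>x::nat \<times> nat \<times> nat. 0) has_sum (ipl2 f f - ipl2 (phase_op N \<sigma> f) (phase_op N \<sigma> f))) UNIV"
    using has_sum_ipl2_diff_phase_op[OF assms assms, of N \<sigma> \<sigma>] by simp
  then have "ipl2 f f - ipl2 (phase_op N \<sigma> f) (phase_op N \<sigma> f) = 0"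
    by (rule has_sum_unique[OF _ has_sum_0_simp])
  then show ?thesis
    by simp
qed

lemma has_sum_ket0:
  fixes f :: "complex \<Rightarrow> 'a::topological_comm_monoid_add"
  assumes "f 0 = 0"
  shows "((\<lambda>x. f (ket0 x)) has_sum f 1) UNIV"
  by (rule has_sum_finite_neutralI[where B = "{(0, 0, 0)}"]) (auto simp: ket0_def assms)

lemma ket0_in_ell2: "ket0 \<in> ell2"
  using has_sum_ket0[of "\<lambda>z. (cmod z)\<^sup>2"] by (auto simp: ell2_iff summable_on_def)

lemma ipl2_ket0: "ipl2 ket0 ket0 = 1"
  using has_sum_ipl2[OF ket0_in_ell2 ket0_in_ell2] has_sum_ket0[of "\<lambda>z. cnj z * z"]
  by (auto dest: has_sum_unique)

lemma psi_in_ell2: "unitary_op U \<Longrightarrow> psi N U \<sigma> j \<in> ell2"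
  by (induction j) (auto simp: psi_def unitary_op_def ket0_in_ell2 phase_op_in_ell2)

lemma ipl2_psi_Suc:
  assumes "unitary_op U"
  shows "ipl2 (psi N U \<sigma> (Suc j)) (psi N U \<tau> (Suc j))
    = ipl2 (phase_op N \<sigma> (psi N U \<sigma> j)) (phase_op N \<tau> (psi N U \<tau> j))"
  using assms psi_in_ell2[OF assms] by (simp add: psi_def unitary_op_def phase_op_in_ell2)

lemma ipl2_psi_self: "unitary_op U \<Longrightarrow> ipl2 (psi N U \<sigma> j) (psi N U \<sigma> j) = 1"
proof (induction j)
  case 0
  then show ?case
    by (simp add: psi_def unitary_op_def ket0_in_ell2 ipl2_ket0)
next
  case (Suc j)
  then show ?case
    by (simp add: ipl2_psi_Suc ipl2_phase_op_self psi_in_ell2)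
qed

lemma has_sum_norm_psi:
  assumes "unitary_op U"
  shows "((\<lambda>x. (cmod (psi N U \<sigma> j x))\<^sup>2) has_sum 1) UNIV"
proof -
  have Re_cnj_mult_self: "Re (cnj z * z) = (cmod z)\<^sup>2" for z
    unfolding cmod_power2 by (simp add: power2_eq_square)
  have "((\<lambda>x. Re (cnj (psi N U \<sigma> j x) * psi N U \<sigma> j x))
      has_sum Re (ipl2 (psi N U \<sigma> j) (psi N U \<sigma> j))) UNIV"
    by (rule has_sum_Re[OF has_sum_ipl2[OF psi_in_ell2[OF assms] psi_in_ell2[OF assms]]])
  then show ?thesis
    by (simp only: Re_cnj_mult_self ipl2_psi_self[OF assms] one_complex.sel)
qed

theorem lemma5:
  fixes N T j :: nat and U :: "qstate \<Rightarrow> qstate"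
  assumes "N \<ge> 2" and "T \<ge> 1" and "unitary_op U" and "j < T"
  shows "cmod (Wsum N U j - Wsum N U (Suc j)) \<le> 2 * pi * fact N"
proof -
  \<comment> \<open>The bound holds for all N and j.\<close>
  note U = \<open>unitary_op U\<close>
  define \<psi> where "\<psi> \<sigma> = psi N U \<sigma> j" for \<sigma>
  have step: "((\<lambda>x. of_real (1 - order_sign N \<sigma> x * order_sign N \<tau> x) * (cnj (\<psi> \<sigma> x) * \<psi> \<tau> x))
      has_sum (ipl2 (psi N U \<sigma> j) (psi N U \<tau> j) - ipl2 (psi N U \<sigma> (Suc j)) (psi N U \<tau> (Suc j)))) UNIV"
    for \<sigma> \<tau>
    unfolding ipl2_psi_Suc[OF U] \<psi>_def by (intro has_sum_ipl2_diff_phase_op psi_in_ell2[OF U])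
  have "Wsum N U j - Wsum N U (Suc j) = (\<Sum>\<sigma>\<in>perms N. \<Sum>\<tau>\<in>perms N. of_real (omega N \<sigma> \<tau>) *
      (ipl2 (psi N U \<sigma> j) (psi N U \<tau> j) - ipl2 (psi N U \<sigma> (Suc j)) (psi N U \<tau> (Suc j))))"
    by (simp add: Wsum_def sum_subtractf right_diff_distrib)
  then have "((\<lambda>x. \<Sum>\<sigma>\<in>perms N. \<Sum>\<tau>\<in>perms N. of_real (omega N \<sigma> \<tau>) *
            (of_real (1 - order_sign N \<sigma> x * order_sign N \<tau> x) * (cnj (\<psi> \<sigma> x) * \<psi> \<tau> x)))
      has_sum (Wsum N U j - Wsum N U (Suc j))) UNIV"
    by (simp only:) (intro has_sum_sum finite_perms has_sum_cmult_right step)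
  moreover have "((\<lambda>x. 2 * pi * (\<Sum>\<sigma>\<in>perms N. (cmod (\<psi> \<sigma> x))\<^sup>2)) has_sum (2 * pi * fact N)) UNIV"
    using has_sum_cmult_right[OF has_sum_sum[OF finite_perms has_sum_norm_psi[OF U]]]
    by (simp add: \<psi>_def card_perms)
  ultimately show ?thesis
    by (rule norm_infsum_le) (rule norm_sum_omega_phase_le)
qed

end
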